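(* Let $a,b,c,d\in\mathbb{Q}$ satisfy $a^4+b^4+c^4+d^4=(a+b+c+d)^4$, with at least three of $a,b,c,d$ non-zero. Put $F=a^2+ab+b^2$, $G=c^2+cd+d^2$ and $H=(a+b)^2+(a+b)(c+d)+(c+d)^2$, and let $t=\frac{H+F}{G}$ (which also equals $\frac{G}{H-F}=\frac{c^2+cd+d^2}{(a+c+d)(b+c+d)}$). Then $t>0$.
   Context: A solution $(a,b,c,d)$ of $a^4+b^4+c^4+d^4=(a+b+c+d)^4$ is called non-trivial if at least three of $a,b,c,d$ are non-zero. For such a solution $G\neq 0$ and $H-F\neq 0$, and the identity $X^4+Y^4+(X+Y)^4=2(X^2+XY+Y^2)^2$ gives $F^2+G^2=H^2$, so that $(H+F)/G=G/(H-F)$. *)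

theory Defs
  imports Complex_Main
begin

end

theory Submission
  imports Defs
begin

text \<open>The binary form x^2 + xy + y^2 is positive definite, since
  4(x^2 + xy + y^2) = (2x + y)^2 + 3y^2. Hence F and G are positive, because at least
  one of a, b and one of c, d is non-zero, while H is non-negative; so (H + F)/G > 0.\<close>

lemma four_times_quadratic_form_eq:
  fixes x y :: "'a::comm_ring_1"
  shows "4 * (x^2 + x*y + y^2) = (2*x + y)^2 + 3 * y^2"
  by (simp add: power2_eq_square algebra_simps)

lemma quadratic_form_pos:
  fixes x y :: "'a::linordered_idom"
  assumes "x \<noteq> 0 \<or> y \<noteq> 0"
  shows "0 < x^2 + x*y + y^2"
proof -
  have "0 < (2*x + y)^2 + 3 * y^2"
  proof (cases "y = 0")
    case True
    with assms show ?thesis by simp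
  next
    case False
    then show ?thesis by (simp add: add_nonneg_pos)
  qed
  then have "0 < 4 * (x^2 + x*y + y^2)"
    by (simp only: four_times_quadratic_form_eq)
  then show ?thesis
    by (simp add: zero_less_mult_iff)
qed

lemma quadratic_form_nonneg:
  fixes x y :: "'a::linordered_idom"
  shows "0 \<le> x^2 + x*y + y^2"
  using quadratic_form_pos[of x y] by (cases "x = 0 \<and> y = 0") auto

theorem mainTheorem1:
  fixes a b c d :: rat
  assumes eq: "a^4 + b^4 + c^4 + d^4 = (a + b + c + d)^4"
    and nontriv: "length (filter (\<lambda>x. x \<noteq> 0) [a, b, c, d]) \<ge> 3"
  shows "let F = a^2 + a*b + b^2;
             G = c^2 + c*d + d^2;
             H = (a+b)^2 + (a+b)*(c+d) + (c+d)^2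
         in (H + F) / G > 0"
proof -
  have "a \<noteq> 0 \<or> b \<noteq> 0" and "c \<noteq> 0 \<or> d \<noteq> 0"
    using nontriv by (auto split: if_splits)
  then have "0 < a^2 + a*b + b^2" and "0 < c^2 + c*d + d^2"
    by (simp_all add: quadratic_form_pos)
  moreover have "0 \<le> (a+b)^2 + (a+b)*(c+d) + (c+d)^2"
    by (rule quadratic_form_nonneg)
  ultimately show ?thesis
    by (simp add: Let_def)
qed

end
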